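(* Let $\mathbb{F}$ be a finite field and let $n_x,n_y,m$ be positive integers with $n_x+n_y\le m$. Let $B\in\mathcal{B}(n_x,n_y,m)$ be a bilinear sequence whose quadratic homogeneous part $\tilde{B}\in\mathcal{B}^{(h)}(n_x,n_y,m)$ is $\mathbf{y}$-semiregular. Then $$d_{\mathbf{y}\text{-}ff}(B)=\min\left\{d\in\mathbb{Z}^+ \;:\; d>\frac{n_x(n_y-1)}{m-n_x}+1\right\}.$$
   Context: Variables $\mathbf{x}=(x_1,\dots,x_{n_x})$, $\mathbf{y}=(y_1,\dots,y_{n_y})$. A bilinear polynomial is $f=\mathbf{x}\mathbf{A}\mathbf{y}^{\top}+\mathbf{b}\mathbf{x}^{\top}+\mathbf{c}\mathbf{y}^{\top}+d$ with $\mathbf{A}\in\mathbb{F}^{n_x\times n_y}$, $\mathbf{b}\in\mathbb{F}^{n_x}$, $\mathbf{c}\in\mathbb{F}^{n_y}$, $d\in\mathbb{F}$; its quadratic homogeneous part is $\mathbf{x}\mathbf{A}\mathbf{y}^{\top}$. $\mathcal{B}(n_x,n_y,m)$ is the set of length-$m$ sequences of bilinear polynomials and $\mathcal{B}^{(h)}(n_x,n_y,m)$ those with zero linear and constant parts; $\tilde B=(\tilde f_1,\dots,\tilde f_m)$ is the sequence of quadratic parts of $B$. For $j\ge2$, $\mathbf{M}_{\mathbf{y},j}(\tilde B)$ is the matrix whose rows are the coefficient vectors of the $m\binom{n_y+j-3}{j-2}$ polynomials $\mathfrak{m}\tilde f_i$, $1\le i\le m$, $\mathfrak{m}$ a monomial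 of $\mathbb{F}[\mathbf{y}]$ of degree exactly $j-2$. $\tilde B$ is $\mathbf{y}$-$d$-regular if $\mathrm{Rank}(\mathbf{M}_{\mathbf{y},j}(\tilde B))=m\binom{n_y+j-3}{j-2}$ for $j=2,\dots,d$; $d_{\mathbf{y},reg}(\tilde B)$ is the minimum $d$ with $\mathrm{Rank}(\mathbf{M}_{\mathbf{y},d}(\tilde B))=n_x\binom{n_y+d-2}{d-1}$; $\tilde B$ is $\mathbf{y}$-semiregular if it is $\mathbf{y}$-$d$-regular for all $d<d_{\mathbf{y},reg}(\tilde B)$. A syzygy of $\tilde B$ is $(g_1,\dots,g_m)$ with $\sum g_i\tilde f_i=0$; it is trivial if it lies in the $\mathbb{F}[\mathbf{x},\mathbf{y}]$-module generated by $\tilde f_i\mathbf{e}_j-\tilde f_j\mathbf{e}_i$ ($1\le i<j\le m$, $\mathbf{e}_i$ the standard basis vectors). $B$ has a $\mathbf{y}$-degree fall at degree $d$ if there is a sequence $G\in\mathbb{F}[\mathbf{y}]^m$ of homogeneous polynomials of degree $d-2$ which is a non-trivial syzygy of $\tilde B$; the $\mathbf{y}$-first fall degree $d_{\mathbf{y}\text{-}ff}(B)$ is the smallest such $d$. *)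

theory Defs
  imports "HOL-Analysis.Analysis" "HOL-Library.Poly_Mapping" "HOL-Library.Extended_Nat"
begin

text \<open>Multivariate polynomials over a field in the variables x_0,x_1,... and y_0,y_1,...
  (indices start at 0; x_i for i < nx and y_j for j < ny are the variables of the paper).\<close>

datatype var = X nat | Y nat

type_synonym monom = "var \<Rightarrow>\<^sub>0 nat"
type_synonym 'a mpoly = "monom \<Rightarrow>\<^sub>0 'a"

definition mdeg :: "monom \<Rightarrow> nat" where
  "mdeg \<mu> = (\<Sum>v\<in>Poly_Mapping.keys \<mu>. Poly_Mapping.lookup \<mu> v)"

definition mon :: "monom \<Rightarrow> 'a::{zero,one} mpoly" where
  "mon \<mu> = Poly_Mapping.single \<mu> 1"

definition pscale :: "'a::field \<Rightarrow> 'a mpoly \<Rightarrow> 'a mpoly" where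
  "pscale c p = Poly_Mapping.map ((*) c) p"

definition rank_rows :: "'a::field mpoly set \<Rightarrow> nat" where
  "rank_rows S = vector_space.dim pscale S"

definition bilinear :: "nat \<Rightarrow> nat \<Rightarrow> 'a::field mpoly \<Rightarrow> bool" where
  "bilinear nx ny f \<longleftrightarrow> (\<forall>\<mu>\<in>Poly_Mapping.keys f.
      \<mu> = 0 \<or> (\<exists>i<nx. \<mu> = Poly_Mapping.single (X i) 1)
      \<or> (\<exists>j<ny. \<mu> = Poly_Mapping.single (Y j) 1)
      \<or> (\<exists>i<nx. \<exists>j<ny. \<mu> = Poly_Mapping.single (X i) 1 + Poly_Mapping.single (Y j) 1))"

text \<open>a sequence B = (f_1..f_m) in B(nx,ny,m), represented by f_0..f_{m-1}\<close>
definition bilinear_seq :: "nat \<Rightarrow> nat \<Rightarrow> nat \<Rightarrow> (nat \<Rightarrow> 'a::field mpoly) \<Rightarrow> bool" where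
  "bilinear_seq nx ny m B \<longleftrightarrow> (\<forall>k<m. bilinear nx ny (B k))"

definition quad_part :: "'a::field mpoly \<Rightarrow> 'a mpoly" where
  "quad_part f = Poly_Mapping.mapp (\<lambda>\<mu> c. if mdeg \<mu> = 2 then c else 0) f"

definition tilde :: "(nat \<Rightarrow> 'a::field mpoly) \<Rightarrow> nat \<Rightarrow> 'a mpoly" where
  "tilde B k = quad_part (B k)"

definition y_monoms :: "nat \<Rightarrow> nat \<Rightarrow> monom set" where
  "y_monoms ny e = {\<mu>. Poly_Mapping.keys \<mu> \<subseteq> Y ` {..<ny} \<and> mdeg \<mu> = e}"

text \<open>the set of rows of M_{y,j}(Bt): coefficient vectors of mon * ft_i\<close>
definition M_y_rows :: "nat \<Rightarrow> nat \<Rightarrow> (nat \<Rightarrow> 'a::field mpoly) \<Rightarrow> nat \<Rightarrow> 'a mpoly set" where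
  "M_y_rows ny m Bt j = {mon \<mu> * Bt i | i \<mu>. i < m \<and> \<mu> \<in> y_monoms ny (j - 2)}"

definition y_d_regular :: "nat \<Rightarrow> nat \<Rightarrow> (nat \<Rightarrow> 'a::field mpoly) \<Rightarrow> nat \<Rightarrow> bool" where
  "y_d_regular ny m Bt d \<longleftrightarrow>
     (\<forall>j\<in>{2..d}. rank_rows (M_y_rows ny m Bt j) = m * ((ny + j - 3) choose (j - 2)))"

definition y_reg_cond :: "nat \<Rightarrow> nat \<Rightarrow> nat \<Rightarrow> (nat \<Rightarrow> 'a::field mpoly) \<Rightarrow> nat \<Rightarrow> bool" where
  "y_reg_cond nx ny m Bt d \<longleftrightarrow> 2 \<le> d \<and>
     rank_rows (M_y_rows ny m Bt d) = nx * ((ny + d - 2) choose (d - 1))"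

definition d_y_reg :: "nat \<Rightarrow> nat \<Rightarrow> nat \<Rightarrow> (nat \<Rightarrow> 'a::field mpoly) \<Rightarrow> enat" where
  "d_y_reg nx ny m Bt = (if \<exists>d. y_reg_cond nx ny m Bt d
     then enat (LEAST d. y_reg_cond nx ny m Bt d) else \<infinity>)"

definition y_semiregular :: "nat \<Rightarrow> nat \<Rightarrow> nat \<Rightarrow> (nat \<Rightarrow> 'a::field mpoly) \<Rightarrow> bool" where
  "y_semiregular nx ny m Bt \<longleftrightarrow>
     (\<forall>d. enat d < d_y_reg nx ny m Bt \<longrightarrow> y_d_regular ny m Bt d)"

definition syzygy :: "nat \<Rightarrow> (nat \<Rightarrow> 'a::field mpoly) \<Rightarrow> (nat \<Rightarrow> 'a mpoly) \<Rightarrow> bool" where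
  "syzygy m Bt G \<longleftrightarrow> (\<Sum>i<m. G i * Bt i) = 0"

text \<open>trivial syzygy: element of the F[x,y]-module generated by ft_i e_j - ft_j e_i, i<j;
  component k of sum_{i<j} h_{ij} (ft_i e_j - ft_j e_i) is
  sum_{i<k} h_{ik} ft_i - sum_{k<j} h_{kj} ft_j\<close>
definition trivial_syzygy :: "nat \<Rightarrow> (nat \<Rightarrow> 'a::field mpoly) \<Rightarrow> (nat \<Rightarrow> 'a mpoly) \<Rightarrow> bool" where
  "trivial_syzygy m Bt G \<longleftrightarrow> (\<exists>h :: nat \<Rightarrow> nat \<Rightarrow> 'a mpoly. \<forall>k<m.
     G k = (\<Sum>i<k. h i k * Bt i) - (\<Sum>j\<in>{k<..<m}. h k j * Bt j))"

definition y_homog :: "nat \<Rightarrow> nat \<Rightarrow> 'a::field mpoly \<Rightarrow> bool" where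
  "y_homog ny e g \<longleftrightarrow> Poly_Mapping.keys g \<subseteq> y_monoms ny e"

definition y_degree_fall :: "nat \<Rightarrow> nat \<Rightarrow> (nat \<Rightarrow> 'a::field mpoly) \<Rightarrow> nat \<Rightarrow> bool" where
  "y_degree_fall ny m B d \<longleftrightarrow> 2 \<le> d \<and> (\<exists>G. (\<forall>i<m. y_homog ny (d - 2) (G i)) \<and>
     syzygy m (tilde B) G \<and> \<not> trivial_syzygy m (tilde B) G)"

definition d_y_ff :: "nat \<Rightarrow> nat \<Rightarrow> (nat \<Rightarrow> 'a::field mpoly) \<Rightarrow> enat" where
  "d_y_ff ny m B = (if \<exists>d. y_degree_fall ny m B d
     then enat (LEAST d. y_degree_fall ny m B d) else \<infinity>)"

end

theory Submission
  imports Defs "HOL-Library.Multiset"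
begin

text \<open>
  A linear dependency among the rows \<open>mon \<mu> * tilde B i\<close> of \<open>M\<^sub>y\<^sub>,\<^sub>d\<close> is the same thing
  as a syzygy of \<open>tilde B\<close> whose components are \<open>y\<close>-homogeneous of degree \<open>d - 2\<close>. Such a
  syzygy is trivial only if it vanishes, because every component of a trivial syzygy lies in the
  ideal generated by the \<open>x\<close>-variables. So \<open>B\<close> has a \<open>y\<close>-degree fall at \<open>d \<ge> 2\<close> exactly
  when \<open>M\<^sub>y\<^sub>,\<^sub>d\<close> has deficient row rank. The matrix has \<open>m C(n\<^sub>y+d-3, d-2)\<close> rows and at
  most \<open>n\<^sub>x C(n\<^sub>y+d-2, d-1)\<close> nonzero columns, and since
  \<open>(d-1) C(n\<^sub>y+d-2, d-1) = (n\<^sub>y+d-2) C(n\<^sub>y+d-3, d-2)\<close> the rows outnumber the columns iff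
  \<open>n\<^sub>x (n\<^sub>y+d-2) < m (d-1)\<close>, which is the stated bound on \<open>d\<close>. Below that bound
  semiregularity gives full row rank: if \<open>d\<^sub>y\<^sub>,\<^sub>r\<^sub>e\<^sub>g\<close> lies below it, then \<open>M\<^sub>y\<^sub>,\<^sub>d\<close> at
  \<open>d = d\<^sub>y\<^sub>,\<^sub>r\<^sub>e\<^sub>g\<close> has full column rank but no more rows than columns, so it is square,
  and the bound is exactly \<open>d\<^sub>y\<^sub>,\<^sub>r\<^sub>e\<^sub>g + 1\<close>.
\<close>

lemma pscale_conv_mult: "pscale c p = Poly_Mapping.single 0 c * p"
  unfolding pscale_def by (rule mult_map_scale_conv_mult)

interpretation mpoly: vector_space "pscale :: 'a::field \<Rightarrow> 'a mpoly \<Rightarrow> 'a mpoly"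
proof
  fix a b :: 'a and x y :: "'a mpoly"
  show "pscale a (x + y) = pscale a x + pscale a y"
    by (simp add: pscale_conv_mult distrib_left)
  show "pscale (a + b) x = pscale a x + pscale b x"
    by (simp add: pscale_conv_mult single_add distrib_right)
  show "pscale a (pscale b x) = pscale (a * b) x"
    by (simp add: pscale_conv_mult mult_single flip: mult.assoc)
  show "pscale 1 x = x"
    by (simp add: pscale_conv_mult)
qed

lemma pscale_mult: "pscale c p * q = pscale c (p * q)"
  unfolding pscale_conv_mult by (simp add: mult.assoc)

lemma lookup_pscale_mon:
  "Poly_Mapping.lookup (pscale c (mon k) :: 'a::field mpoly) j = (if k = j then c else 0)"
  by (simp add: mon_def pscale_def map.rep_eq lookup_single when_def)

lemma lookup_sum_pscale_mon:
  fixes c :: "monom \<Rightarrow> 'a::field"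
  assumes "finite K"
  shows "Poly_Mapping.lookup (\<Sum>k\<in>K. pscale (c k) (mon k)) j = (if j \<in> K then c j else 0)"
  using assms by (simp add: lookup_sum lookup_pscale_mon sum.delta')

lemma keys_sum_pscale_mon:
  fixes c :: "monom \<Rightarrow> 'a::field"
  assumes "finite K"
  shows "Poly_Mapping.keys (\<Sum>k\<in>K. pscale (c k) (mon k)) \<subseteq> K"
  using assms by (auto simp: in_keys_iff lookup_sum_pscale_mon split: if_splits)

lemma mpoly_eq_sum_mon:
  fixes p :: "'a::field mpoly"
  assumes "finite K" "Poly_Mapping.keys p \<subseteq> K"
  shows "p = (\<Sum>k\<in>K. pscale (Poly_Mapping.lookup p k) (mon k))"
  using assms by (intro poly_mapping_eqI) (auto simp: lookup_sum_pscale_mon in_keys_iff)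

lemma mpoly_in_span_mon:
  fixes p :: "'a::field mpoly"
  assumes "finite K" "Poly_Mapping.keys p \<subseteq> K"
  shows "p \<in> mpoly.span (mon ` K)"
  by (subst mpoly_eq_sum_mon[OF assms])
    (intro mpoly.span_sum mpoly.span_scale mpoly.span_base imageI)

context vector_space
begin

lemma independent_if_dim_eq_card:
  assumes "finite S" "dim S = card S"
  shows "independent S"
proof (rule ccontr)
  assume "\<not> independent S"
  then obtain a where a: "a \<in> S" "a \<in> span (S - {a})"
    unfolding dependent_def by blast
  then have "S \<subseteq> span (S - {a})"
    using span_base[of _ "S - {a}"] by blast
  then have "dim S \<le> card (S - {a})"
    using assms(1) by (intro dim_le_card) auto
  also have "\<dots> < card S"
    using assms(1) a(1) by (rule card_Diff1_less)
  finally show False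
    using assms(2) by simp
qed

lemma dim_image_eq_card_iff:
  assumes "finite I"
  shows "dim (f ` I) = card I \<longleftrightarrow> inj_on f I \<and> independent (f ` I)"
proof
  assume dim: "dim (f ` I) = card I"
  have "dim (f ` I) \<le> card (f ` I)"
    using assms by (intro dim_le_card span_superset) auto
  with dim card_image_le[OF assms, of f] have card: "card (f ` I) = card I"
    by linarith
  then have "inj_on f I"
    using assms eq_card_imp_inj_on by blast
  moreover have "independent (f ` I)"
    using assms dim card by (intro independent_if_dim_eq_card) auto
  ultimately show "inj_on f I \<and> independent (f ` I)" ..
next
  assume "inj_on f I \<and> independent (f ` I)"
  then show "dim (f ` I) = card I"
    by (simp add: dim_eq_card_independent card_image)
qed

lemma inj_on_independent_image_iff:
  assumes "finite I"
  shows "inj_on f I \<and> independent (f ` I) \<longleftrightarrow>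
    (\<forall>c. (\<Sum>i\<in>I. scale (c i) (f i)) = 0 \<longrightarrow> (\<forall>i\<in>I. c i = 0))"
proof
  assume "inj_on f I \<and> independent (f ` I)"
  then have inj: "inj_on f I" and indep: "independent (f ` I)"
    by auto
  show "\<forall>c. (\<Sum>i\<in>I. scale (c i) (f i)) = 0 \<longrightarrow> (\<forall>i\<in>I. c i = 0)"
  proof (intro allI impI ballI)
    fix c i
    assume "(\<Sum>i\<in>I. scale (c i) (f i)) = 0" and i: "i \<in> I"
    then have "(\<Sum>v\<in>f ` I. scale (c (the_inv_into I f v)) v) = 0"
      by (simp add: sum.reindex[OF inj] the_inv_into_f_f[OF inj])
    then have "c (the_inv_into I f (f i)) = 0"
      using assms i by (intro independentD[OF indep]) auto
    then show "c i = 0"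
      by (simp add: the_inv_into_f_f[OF inj i])
  qed
next
  assume no_rel: "\<forall>c. (\<Sum>i\<in>I. scale (c i) (f i)) = 0 \<longrightarrow> (\<forall>i\<in>I. c i = 0)"
  have inj: "inj_on f I"
  proof (rule inj_onI, rule ccontr)
    fix a b
    assume ab: "a \<in> I" "b \<in> I" "f a = f b" "a \<noteq> b"
    define c where "c i = ((if i = a then 1 else 0) - (if i = b then 1 else 0) :: 'a)" for i
    have "(\<Sum>i\<in>I. scale (c i) (f i)) = f a - f b"
      using assms ab(1,2)
      by (simp add: c_def scale_left_diff_distrib sum_subtractf if_distrib[of "\<lambda>x. scale x _"]
          sum.delta' cong: if_cong)
    with ab no_rel show False
      unfolding c_def by fastforce
  qed
  moreover have "independent (f ` I)"
  proof
    assume "dependent (f ` I)"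
    then obtain u v where "v \<in> f ` I" "u v \<noteq> 0" "(\<Sum>w\<in>f ` I. scale (u w) w) = 0"
      using dependent_finite[of "f ` I"] assms by auto
    then obtain i where "i \<in> I" "u (f i) \<noteq> 0" "(\<Sum>i\<in>I. scale (u (f i)) (f i)) = 0"
      by (auto simp: sum.reindex[OF inj])
    with no_rel[THEN spec[of _ "\<lambda>i. u (f i)"]] show False
      by blast
  qed
  ultimately show "inj_on f I \<and> independent (f ` I)" ..
qed

end

lemma mdeg_add: "mdeg (\<mu> + \<nu>) = mdeg \<mu> + mdeg \<nu>"
  unfolding mdeg_def by (rule setsum_keys_plus_distrib[where f = "\<lambda>_ n. n"]) simp_all

lemma mdeg_zero [simp]: "mdeg 0 = 0"
  unfolding mdeg_def by simp

lemma mdeg_single [simp]: "mdeg (Poly_Mapping.single v n) = n"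
  unfolding mdeg_def by (cases "n = 0") auto

definition mset_of_monom :: "monom \<Rightarrow> var multiset" where
  "mset_of_monom \<mu> = Abs_multiset (Poly_Mapping.lookup \<mu>)"

lemma count_mset_of_monom: "count (mset_of_monom \<mu>) = Poly_Mapping.lookup \<mu>"
  unfolding mset_of_monom_def by (rule count_Abs_multiset) simp

lemma set_mset_of_monom: "set_mset (mset_of_monom \<mu>) = Poly_Mapping.keys \<mu>"
  by (auto simp: set_mset_def count_mset_of_monom in_keys_iff)

lemma size_mset_of_monom: "size (mset_of_monom \<mu>) = mdeg \<mu>"
  unfolding mdeg_def size_multiset_overloaded_eq set_mset_of_monom count_mset_of_monom ..

lemma mset_of_monom_Abs_poly_mapping: "mset_of_monom (Abs_poly_mapping (count M)) = M"
proof -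
  have "{x. count M x \<noteq> 0} = set_mset M"
    by auto
  then have "finite {x. count M x \<noteq> 0}"
    by simp
  then show ?thesis
    by (intro multiset_eqI) (simp add: count_mset_of_monom)
qed

lemma bij_betw_y_monoms_multisets_of_size:
  "bij_betw mset_of_monom (y_monoms ny e) (multisets_of_size (Y ` {..<ny}) e)"
proof (rule bij_betw_byWitness[where f' = "\<lambda>M. Abs_poly_mapping (count M)"])
  show "\<forall>\<mu>\<in>y_monoms ny e. Abs_poly_mapping (count (mset_of_monom \<mu>)) = \<mu>"
    by (simp add: count_mset_of_monom)
  show "\<forall>M\<in>multisets_of_size (Y ` {..<ny}) e. mset_of_monom (Abs_poly_mapping (count M)) = M"
    by (simp add: mset_of_monom_Abs_poly_mapping)
  show "mset_of_monom ` y_monoms ny e \<subseteq> multisets_of_size (Y ` {..<ny}) e"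
    by (auto simp: y_monoms_def multisets_of_size_def set_mset_of_monom size_mset_of_monom)
  show "(\<lambda>M. Abs_poly_mapping (count M)) ` multisets_of_size (Y ` {..<ny}) e \<subseteq> y_monoms ny e"
  proof (rule image_subsetI)
    fix M
    assume M: "M \<in> multisets_of_size (Y ` {..<ny}) e"
    have "mset_of_monom (Abs_poly_mapping (count M)) = M"
      by (rule mset_of_monom_Abs_poly_mapping)
    with M show "Abs_poly_mapping (count M) \<in> y_monoms ny e"
      using set_mset_of_monom[of "Abs_poly_mapping (count M)"]
        size_mset_of_monom[of "Abs_poly_mapping (count M)"]
      by (simp add: y_monoms_def multisets_of_size_def)
  qed
qed

lemma finite_y_monoms [simp]: "finite (y_monoms ny e)"
  using bij_betw_finite[OF bij_betw_y_monoms_multisets_of_size] by auto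

lemma card_y_monoms: "card (y_monoms ny e) = (ny + e - 1) choose e"
proof -
  have "card (y_monoms ny e) = card (multisets_of_size (Y ` {..<ny}) e)"
    by (rule bij_betw_same_card[OF bij_betw_y_monoms_multisets_of_size])
  also have "\<dots> = (card (Y ` {..<ny}) + e - 1) choose e"
    by (rule card_multisets_of_size) simp
  also have "card (Y ` {..<ny}) = ny"
    by (simp add: card_image inj_on_def)
  finally show ?thesis .
qed

lemma add_Y_in_y_monoms:
  assumes "\<mu> \<in> y_monoms ny e" "j < ny"
  shows "\<mu> + Poly_Mapping.single (Y j) 1 \<in> y_monoms ny (Suc e)"
proof -
  have "Poly_Mapping.keys (\<mu> + Poly_Mapping.single (Y j) 1) \<subseteq> Y ` {..<ny}"
    using assms keys_add[of \<mu> "Poly_Mapping.single (Y j) 1"] unfolding y_monoms_def by auto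
  moreover have "mdeg (\<mu> + Poly_Mapping.single (Y j) 1) = Suc e"
    using assms(1) unfolding y_monoms_def by (simp add: mdeg_add)
  ultimately show ?thesis
    unfolding y_monoms_def by simp
qed

lemma keys_quad_part_bilinear:
  fixes f :: "'a::field mpoly"
  assumes "bilinear nx ny f" "\<kappa> \<in> Poly_Mapping.keys (quad_part f)"
  shows "\<exists>i<nx. \<exists>j<ny. \<kappa> = Poly_Mapping.single (X i) 1 + Poly_Mapping.single (Y j) 1"
proof -
  have "\<kappa> \<in> Poly_Mapping.keys f" "mdeg \<kappa> = 2"
    using assms(2) by (auto simp: quad_part_def in_keys_iff lookup_mapp when_def split: if_splits)
  with assms(1) show ?thesis
    unfolding bilinear_def by (auto simp: mdeg_add)
qed

lemma M_y_rows_eq_image: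
  "M_y_rows ny m Bt d = (\<lambda>(i, \<mu>). mon \<mu> * Bt i) ` ({..<m} \<times> y_monoms ny (d - 2))"
  unfolding M_y_rows_def by auto

lemma rank_M_y_rows_le_rows:
  assumes "2 \<le> d"
  shows "rank_rows (M_y_rows ny m Bt d) \<le> m * ((ny + d - 3) choose (d - 2))"
proof -
  let ?I = "{..<m} \<times> y_monoms ny (d - 2)"
  have "rank_rows (M_y_rows ny m Bt d) \<le> card ((\<lambda>(i, \<mu>). mon \<mu> * Bt i) ` ?I)"
    unfolding rank_rows_def M_y_rows_eq_image by (intro mpoly.dim_le_card mpoly.span_superset) auto
  also have "\<dots> \<le> card ?I"
    by (intro card_image_le) simp
  also have "card ?I = m * ((ny + d - 3) choose (d - 2))"
    using assms by (simp add: card_cartesian_product card_y_monoms)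
  finally show ?thesis .
qed

lemma keys_mon_mult_tilde:
  fixes B :: "nat \<Rightarrow> 'a::field mpoly"
  assumes "bilinear_seq nx ny m B" "i < m" "\<mu> \<in> y_monoms ny e"
  shows "Poly_Mapping.keys (mon \<mu> * tilde B i) \<subseteq>
    (\<lambda>(i, \<nu>). Poly_Mapping.single (X i) 1 + \<nu>) ` ({..<nx} \<times> y_monoms ny (Suc e))"
proof
  fix \<kappa>
  assume "\<kappa> \<in> Poly_Mapping.keys (mon \<mu> * tilde B i)"
  then obtain \<beta> where \<beta>: "\<beta> \<in> Poly_Mapping.keys (tilde B i)" "\<kappa> = \<mu> + \<beta>"
    using keys_mult[of "mon \<mu>" "tilde B i"] by (auto simp: mon_def)
  obtain p q where pq: "p < nx" "q < ny"
    "\<beta> = Poly_Mapping.single (X p) 1 + Poly_Mapping.single (Y q) 1"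
    using keys_quad_part_bilinear \<beta>(1) assms(1,2) unfolding bilinear_seq_def tilde_def by blast
  have "\<kappa> = Poly_Mapping.single (X p) 1 + (\<mu> + Poly_Mapping.single (Y q) 1)"
    using \<beta>(2) pq(3) by (simp add: algebra_simps)
  with add_Y_in_y_monoms[OF assms(3) pq(2)] pq(1)
  show "\<kappa> \<in> (\<lambda>(i, \<nu>). Poly_Mapping.single (X i) 1 + \<nu>) ` ({..<nx} \<times> y_monoms ny (Suc e))"
    by force
qed

lemma rank_M_y_rows_le_cols:
  fixes B :: "nat \<Rightarrow> 'a::field mpoly"
  assumes "bilinear_seq nx ny m B" "2 \<le> d"
  shows "rank_rows (M_y_rows ny m (tilde B) d) \<le> nx * ((ny + d - 2) choose (d - 1))"
proof -
  define C where "C = (\<lambda>(i, \<nu>). Poly_Mapping.single (X i) 1 + \<nu>) ` ({..<nx} \<times> y_monoms ny (d - 1))"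
  have "Suc (d - 2) = d - 1"
    using assms(2) by simp
  then have "M_y_rows ny m (tilde B) d \<subseteq> mpoly.span (mon ` C)"
    using keys_mon_mult_tilde[OF assms(1), of _ _ "d - 2"]
    unfolding M_y_rows_eq_image C_def by (auto intro!: mpoly_in_span_mon)
  then have "rank_rows (M_y_rows ny m (tilde B) d) \<le> card (mon ` C :: 'a mpoly set)"
    unfolding rank_rows_def C_def by (intro mpoly.dim_le_card) auto
  also have "\<dots> \<le> card ({..<nx} \<times> y_monoms ny (d - 1))"
    unfolding C_def image_image by (intro card_image_le) simp
  also have "\<dots> = nx * ((ny + d - 2) choose (d - 1))"
    using assms(2) by (simp add: card_cartesian_product card_y_monoms numeral_2_eq_2)
  finally show ?thesis .
qed

lemma mult_eq_sum_mon_mult: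
  fixes p q :: "'a::field mpoly"
  assumes "finite K" "Poly_Mapping.keys p \<subseteq> K"
  shows "p * q = (\<Sum>k\<in>K. pscale (Poly_Mapping.lookup p k) (mon k * q))"
proof -
  from mpoly_eq_sum_mon[OF assms]
  have "p * q = (\<Sum>k\<in>K. pscale (Poly_Mapping.lookup p k) (mon k)) * q"
    by (rule arg_cong[where f = "\<lambda>r. r * q"])
  then show ?thesis
    by (simp add: sum_distrib_right pscale_mult)
qed

lemma sum_mult_y_homog_eq_sum_rows:
  fixes G Bt :: "nat \<Rightarrow> 'a::field mpoly"
  assumes "\<forall>i<m. y_homog ny e (G i)"
  shows "(\<Sum>i<m. G i * Bt i) =
    (\<Sum>(i, \<mu>)\<in>{..<m} \<times> y_monoms ny e. pscale (Poly_Mapping.lookup (G i) \<mu>) (mon \<mu> * Bt i))"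
proof -
  have "(\<Sum>i<m. G i * Bt i) =
      (\<Sum>i<m. \<Sum>\<mu>\<in>y_monoms ny e. pscale (Poly_Mapping.lookup (G i) \<mu>) (mon \<mu> * Bt i))"
    using assms unfolding y_homog_def by (intro sum.cong refl mult_eq_sum_mon_mult) auto
  then show ?thesis
    by (simp add: sum.cartesian_product)
qed

lemma y_homog_syzygy_of_row_relation:
  fixes Bt :: "nat \<Rightarrow> 'a::field mpoly" and c :: "nat \<times> monom \<Rightarrow> 'a"
  assumes "(\<Sum>(i, \<mu>)\<in>{..<m} \<times> y_monoms ny e. pscale (c (i, \<mu>)) (mon \<mu> * Bt i)) = 0"
  defines "G \<equiv> \<lambda>i. \<Sum>\<mu>\<in>y_monoms ny e. pscale (c (i, \<mu>)) (mon \<mu>)"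
  shows "\<forall>i<m. y_homog ny e (G i)" and "syzygy m Bt G"
proof -
  show homog: "\<forall>i<m. y_homog ny e (G i)"
    by (simp add: G_def y_homog_def keys_sum_pscale_mon)
  have "(\<Sum>i<m. G i * Bt i) =
      (\<Sum>(i, \<mu>)\<in>{..<m} \<times> y_monoms ny e. pscale (c (i, \<mu>)) (mon \<mu> * Bt i))"
    unfolding sum_mult_y_homog_eq_sum_rows[OF homog]
    by (intro sum.cong) (auto simp: G_def lookup_sum_pscale_mon)
  with assms(1) show "syzygy m Bt G"
    by (simp add: syzygy_def)
qed

lemma rank_M_y_rows_eq_iff_syzygies_vanish:
  fixes Bt :: "nat \<Rightarrow> 'a::field mpoly"
  shows "rank_rows (M_y_rows ny m Bt d) = m * card (y_monoms ny (d - 2)) \<longleftrightarrow>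
    (\<forall>G. (\<forall>i<m. y_homog ny (d - 2) (G i)) \<and> syzygy m Bt G \<longrightarrow> (\<forall>i<m. G i = 0))"
    (is "_ \<longleftrightarrow> ?vanish")
proof -
  let ?I = "{..<m} \<times> y_monoms ny (d - 2)"
  let ?row = "\<lambda>(i, \<mu>). mon \<mu> * Bt i"
  have "rank_rows (M_y_rows ny m Bt d) = m * card (y_monoms ny (d - 2)) \<longleftrightarrow>
      mpoly.dim (?row ` ?I) = card ?I"
    by (simp add: rank_rows_def M_y_rows_eq_image card_cartesian_product)
  also have "\<dots> \<longleftrightarrow> inj_on ?row ?I \<and> mpoly.independent (?row ` ?I)"
    by (rule mpoly.dim_image_eq_card_iff) simp
  also have "\<dots> \<longleftrightarrow> (\<forall>c. (\<Sum>x\<in>?I. pscale (c x) (?row x)) = 0 \<longrightarrow> (\<forall>x\<in>?I. c x = 0))"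
    by (rule mpoly.inj_on_independent_image_iff) simp
  also have "\<dots> \<longleftrightarrow> ?vanish"
  proof
    assume no_rel: "\<forall>c. (\<Sum>x\<in>?I. pscale (c x) (?row x)) = 0 \<longrightarrow> (\<forall>x\<in>?I. c x = 0)"
    show ?vanish
    proof (intro allI impI)
      fix G i
      assume G: "(\<forall>i<m. y_homog ny (d - 2) (G i)) \<and> syzygy m Bt G" and i: "i < m"
      then have "\<forall>x\<in>?I. (\<lambda>(i, \<mu>). Poly_Mapping.lookup (G i) \<mu>) x = 0"
        using no_rel sum_mult_y_homog_eq_sum_rows[of m ny "d - 2" G Bt]
        by (auto simp: syzygy_def case_prod_unfold)
      then have "Poly_Mapping.keys (G i) \<inter> y_monoms ny (d - 2) = {}"
        using i by (auto simp: in_keys_iff)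
      moreover have "Poly_Mapping.keys (G i) \<subseteq> y_monoms ny (d - 2)"
        using G i by (simp add: y_homog_def)
      ultimately show "G i = 0"
        by (metis Int_absorb2 keys_eq_empty)
    qed
  next
    assume vanish: ?vanish
    show "\<forall>c. (\<Sum>x\<in>?I. pscale (c x) (?row x)) = 0 \<longrightarrow> (\<forall>x\<in>?I. c x = 0)"
    proof (intro allI impI ballI)
      fix c x
      assume "(\<Sum>x\<in>?I. pscale (c x) (?row x)) = 0" and x: "x \<in> ?I"
      then have "(\<Sum>(i, \<mu>)\<in>?I. pscale (c (i, \<mu>)) (mon \<mu> * Bt i)) = 0"
        by (simp add: case_prod_unfold)
      from y_homog_syzygy_of_row_relation[OF this] vanish x
      have G0: "(\<Sum>\<mu>\<in>y_monoms ny (d - 2). pscale (c (fst x, \<mu>)) (mon \<mu>)) = 0"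
        by auto
      show "c x = 0"
        using x arg_cong[OF G0, of "\<lambda>p. Poly_Mapping.lookup p (snd x)"]
        by (auto simp: lookup_sum_pscale_mon)
    qed
  qed
  finally show ?thesis .
qed

definition in_x_ideal :: "'a::field mpoly \<Rightarrow> bool" where
  "in_x_ideal p \<longleftrightarrow> (\<forall>\<kappa>\<in>Poly_Mapping.keys p. \<exists>i. X i \<in> Poly_Mapping.keys \<kappa>)"

lemma in_x_ideal_mult_left:
  assumes "in_x_ideal q"
  shows "in_x_ideal (h * q)"
  unfolding in_x_ideal_def
proof
  fix \<kappa>
  assume "\<kappa> \<in> Poly_Mapping.keys (h * q)"
  then obtain \<alpha> \<beta> where \<beta>: "\<beta> \<in> Poly_Mapping.keys q" and \<kappa>: "\<kappa> = \<alpha> + \<beta>"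
    using keys_mult[of h q] by auto
  from \<beta> assms obtain i where "X i \<in> Poly_Mapping.keys \<beta>"
    unfolding in_x_ideal_def by blast
  then have "X i \<in> Poly_Mapping.keys \<kappa>"
    unfolding \<kappa> by (simp add: in_keys_iff lookup_add)
  then show "\<exists>i. X i \<in> Poly_Mapping.keys \<kappa>" ..
qed

lemma in_x_ideal_sum: "(\<And>i. i \<in> I \<Longrightarrow> in_x_ideal (f i)) \<Longrightarrow> in_x_ideal (sum f I)"
  unfolding in_x_ideal_def using keys_sum[of f I] by blast

lemma in_x_ideal_diff: "in_x_ideal p \<Longrightarrow> in_x_ideal q \<Longrightarrow> in_x_ideal (p - q)"
  unfolding in_x_ideal_def using keys_diff[of p q] by blast

lemma in_x_ideal_tilde:
  fixes B :: "nat \<Rightarrow> 'a::field mpoly"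
  assumes "bilinear_seq nx ny m B" "i < m"
  shows "in_x_ideal (tilde B i)"
  unfolding in_x_ideal_def
proof
  fix \<kappa>
  assume "\<kappa> \<in> Poly_Mapping.keys (tilde B i)"
  then obtain p q where "\<kappa> = Poly_Mapping.single (X p) 1 + Poly_Mapping.single (Y q) 1"
    using keys_quad_part_bilinear[of nx ny "B i"] assms unfolding bilinear_seq_def tilde_def by blast
  then have "X p \<in> Poly_Mapping.keys \<kappa>"
    by (simp add: in_keys_iff lookup_add)
  then show "\<exists>i. X i \<in> Poly_Mapping.keys \<kappa>" ..
qed

lemma y_homog_in_x_ideal_eq_0:
  assumes "y_homog ny e p" "in_x_ideal p"
  shows "p = 0"
proof -
  have "\<kappa> \<notin> Poly_Mapping.keys p" for \<kappa>
  proof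
    assume \<kappa>: "\<kappa> \<in> Poly_Mapping.keys p"
    with assms(2) obtain i where "X i \<in> Poly_Mapping.keys \<kappa>"
      unfolding in_x_ideal_def by blast
    moreover have "Poly_Mapping.keys \<kappa> \<subseteq> Y ` {..<ny}"
      using assms(1) \<kappa> unfolding y_homog_def y_monoms_def by blast
    ultimately show False
      by blast
  qed
  then show ?thesis
    by (metis keys_eq_empty all_not_in_conv)
qed

lemma trivial_syzygy_iff_zero_if_y_homog:
  fixes B G :: "nat \<Rightarrow> 'a::field mpoly"
  assumes "bilinear_seq nx ny m B" "\<forall>i<m. y_homog ny e (G i)"
  shows "trivial_syzygy m (tilde B) G \<longleftrightarrow> (\<forall>i<m. G i = 0)"
proof
  assume "trivial_syzygy m (tilde B) G"
  then obtain h where h: "\<forall>k<m. G k = (\<Sum>i<k. h i k * tilde B i) - (\<Sum>j\<in>{k<..<m}. h k j * tilde B j)"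
    unfolding trivial_syzygy_def by blast
  have "in_x_ideal (G k)" if "k < m" for k
    unfolding h[rule_format, OF that] using assms(1) that
    by (intro in_x_ideal_diff in_x_ideal_sum in_x_ideal_mult_left in_x_ideal_tilde[OF assms(1)]) auto
  with assms(2) show "\<forall>i<m. G i = 0"
    using y_homog_in_x_ideal_eq_0 by blast
next
  assume "\<forall>i<m. G i = 0"
  then show "trivial_syzygy m (tilde B) G"
    unfolding trivial_syzygy_def by (intro exI[of _ "\<lambda>_ _. 0"]) simp
qed

lemma y_degree_fall_iff_rank_deficient:
  fixes B :: "nat \<Rightarrow> 'a::field mpoly"
  assumes "bilinear_seq nx ny m B"
  shows "y_degree_fall ny m B d \<longleftrightarrow>
    2 \<le> d \<and> rank_rows (M_y_rows ny m (tilde B) d) \<noteq> m * ((ny + d - 3) choose (d - 2))"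
proof (cases "2 \<le> d")
  case True
  have "y_degree_fall ny m B d \<longleftrightarrow> (\<exists>G. (\<forall>i<m. y_homog ny (d - 2) (G i)) \<and>
      syzygy m (tilde B) G \<and> \<not> (\<forall>i<m. G i = 0))"
    unfolding y_degree_fall_def using True trivial_syzygy_iff_zero_if_y_homog[OF assms] by blast
  also have "\<dots> \<longleftrightarrow> rank_rows (M_y_rows ny m (tilde B) d) \<noteq> m * card (y_monoms ny (d - 2))"
    unfolding rank_M_y_rows_eq_iff_syzygies_vanish by blast
  also have "m * card (y_monoms ny (d - 2)) = m * ((ny + d - 3) choose (d - 2))"
    using True by (simp add: card_y_monoms)
  finally show ?thesis
    using True by blast
qed (simp add: y_degree_fall_def)

lemma d_y_ff_eqI:
  assumes "y_degree_fall ny m B d" "\<And>e. e < d \<Longrightarrow> \<not> y_degree_fall ny m B e"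
  shows "d_y_ff ny m B = enat d"
proof -
  have "(LEAST e. y_degree_fall ny m B e) = d"
    using assms by (intro Least_equality) (auto simp: not_less[symmetric])
  with assms(1) show ?thesis
    unfolding d_y_ff_def by auto
qed

lemma binomial_cols_rows_ratio:
  assumes "0 < ny" "2 \<le> d"
  shows "(d - 1) * ((ny + d - 2) choose (d - 1)) = (ny + d - 2) * ((ny + d - 3) choose (d - 2))"
proof -
  have "ny + d - 2 = Suc (ny + d - 3)" "d - 1 = Suc (d - 2)"
    using assms by auto
  then show ?thesis
    by (metis Suc_times_binomial)
qed

lemma
  assumes "0 < ny" "2 \<le> d"
  shows cols_less_rows_iff: "nx * ((ny + d - 2) choose (d - 1)) < m * ((ny + d - 3) choose (d - 2)) \<longleftrightarrow>
    nx * (ny + d - 2) < m * (d - 1)"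
    and rows_eq_cols_iff: "m * ((ny + d - 3) choose (d - 2)) = nx * ((ny + d - 2) choose (d - 1)) \<longleftrightarrow>
    m * (d - 1) = nx * (ny + d - 2)"
proof -
  let ?b = "(ny + d - 3) choose (d - 2)"
  have b: "0 < ?b" and d: "0 < d - 1"
    using assms by (simp_all add: zero_less_binomial_iff)
  have cols: "(d - 1) * (nx * ((ny + d - 2) choose (d - 1))) = nx * (ny + d - 2) * ?b"
    using binomial_cols_rows_ratio[OF assms] by (metis mult.assoc mult.left_commute)
  have rows: "(d - 1) * (m * ?b) = m * (d - 1) * ?b"
    by simp
  show "nx * ((ny + d - 2) choose (d - 1)) < m * ?b \<longleftrightarrow> nx * (ny + d - 2) < m * (d - 1)"
    using mult_less_cancel1[of "d - 1"] mult_less_cancel2[of _ ?b] b d cols rows by metis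
  show "m * ?b = nx * ((ny + d - 2) choose (d - 1)) \<longleftrightarrow> m * (d - 1) = nx * (ny + d - 2)"
    using mult_cancel1[of "d - 1"] mult_cancel2[of _ ?b] b d cols rows by (metis less_not_refl)
qed

lemma square_imp_next_cols_less_rows:
  assumes "0 < ny" "2 \<le> d" "nx < m"
    and "m * ((ny + d - 3) choose (d - 2)) = nx * ((ny + d - 2) choose (d - 1))"
  shows "nx * (ny + Suc d - 2) < m * (Suc d - 1)"
proof -
  have "m * (d - 1) = nx * (ny + d - 2)"
    using assms(4) rows_eq_cols_iff[OF assms(1,2), where nx = nx and m = m] by blast
  moreover have "Suc d - 1 = (d - 1) + 1" "ny + Suc d - 2 = (ny + d - 2) + 1"
    using assms(2) by auto
  ultimately show ?thesis
    using assms(3) by (simp only: distrib_left mult_1_right)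
qed

lemma y_semiregular_full_rank_below_threshold:
  fixes Bt :: "nat \<Rightarrow> 'a::field mpoly"
  assumes semireg: "y_semiregular nx ny m Bt" and "nx < m" "0 < ny" "2 \<le> d"
    and below: "\<And>e. 2 \<le> e \<Longrightarrow> e \<le> d \<Longrightarrow> m * (e - 1) \<le> nx * (ny + e - 2)"
  shows "rank_rows (M_y_rows ny m Bt d) = m * ((ny + d - 3) choose (d - 2))"
proof (cases "enat d < d_y_reg nx ny m Bt")
  case True
  with semireg \<open>2 \<le> d\<close> show ?thesis
    unfolding y_semiregular_def y_d_regular_def by auto
next
  case False
  then have ex: "\<exists>e. y_reg_cond nx ny m Bt e"
    unfolding d_y_reg_def by (auto split: if_splits)
  define d0 where "d0 = (LEAST e. y_reg_cond nx ny m Bt e)"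
  have reg: "y_reg_cond nx ny m Bt d0"
    unfolding d0_def using ex by (rule LeastI_ex)
  have "d0 \<le> d"
    using False ex unfolding d_y_reg_def d0_def by simp
  let ?rank = "rank_rows (M_y_rows ny m Bt d0)"
  have d0: "2 \<le> d0" and rank_cols: "?rank = nx * ((ny + d0 - 2) choose (d0 - 1))"
    using reg unfolding y_reg_cond_def by auto
  have "\<not> nx * (ny + d0 - 2) < m * (d0 - 1)"
    using below[OF d0 \<open>d0 \<le> d\<close>] by simp
  then have "m * ((ny + d0 - 3) choose (d0 - 2)) \<le> nx * ((ny + d0 - 2) choose (d0 - 1))"
    using cols_less_rows_iff[OF \<open>0 < ny\<close> d0, where nx = nx and m = m] by linarith
  with rank_M_y_rows_le_rows[OF d0, of ny m Bt] rank_cols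
  have square: "m * ((ny + d0 - 3) choose (d0 - 2)) = nx * ((ny + d0 - 2) choose (d0 - 1))"
    by linarith
  with below[of "Suc d0"] square_imp_next_cols_less_rows[OF \<open>0 < ny\<close> d0 \<open>nx < m\<close>]
    \<open>d0 \<le> d\<close>
  have "d = d0"
    by fastforce
  with rank_cols square show ?thesis
    by simp
qed

lemma real_threshold_iff:
  fixes nx ny m d :: nat
  assumes "nx < m" "0 < ny"
  shows "0 < d \<and> real d > real (nx * (ny - 1)) / real (m - nx) + 1 \<longleftrightarrow>
    2 \<le> d \<and> nx * (ny + d - 2) < m * (d - 1)"
proof (cases "2 \<le> d")
  case True
  have pos: "0 < real m - real nx"
    using assms by simp
  have "real d > real (nx * (ny - 1)) / real (m - nx) + 1 \<longleftrightarrow>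
      real nx * (real ny - 1) < (real d - 1) * (real m - real nx)"
    using assms pos by (simp add: of_nat_diff field_simps)
  also have "\<dots> \<longleftrightarrow> real nx * (real ny + real d - 2) < real m * (real d - 1)"
    by (simp add: algebra_simps)
  also have "\<dots> \<longleftrightarrow> real (nx * (ny + d - 2)) < real (m * (d - 1))"
    using True by (simp add: of_nat_diff)
  also have "\<dots> \<longleftrightarrow> nx * (ny + d - 2) < m * (d - 1)"
    by (rule of_nat_less_iff)
  finally show ?thesis
    using True by simp
next
  case False
  then have "d = 0 \<or> d = 1"
    by auto
  then show ?thesis
    by (auto simp: divide_less_0_iff mult_less_0_iff)
qed

lemma y_degree_fall_above_threshold:
  fixes B :: "nat \<Rightarrow> 'a::field mpoly"
  assumes "bilinear_seq nx ny m B" "0 < ny" "2 \<le> d" "nx * (ny + d - 2) < m * (d - 1)"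
  shows "y_degree_fall ny m B d"
proof -
  have "rank_rows (M_y_rows ny m (tilde B) d) < m * ((ny + d - 3) choose (d - 2))"
    using rank_M_y_rows_le_cols[OF assms(1,3)]
      cols_less_rows_iff[OF assms(2,3), where nx = nx and m = m] assms(4)
    by linarith
  with assms(3) show ?thesis
    by (simp add: y_degree_fall_iff_rank_deficient[OF assms(1)])
qed

lemma no_y_degree_fall_below_threshold:
  fixes B :: "nat \<Rightarrow> 'a::field mpoly"
  assumes "bilinear_seq nx ny m B" "y_semiregular nx ny m (tilde B)" "nx < m" "0 < ny"
    and "\<And>e. 2 \<le> e \<Longrightarrow> e \<le> d \<Longrightarrow> m * (e - 1) \<le> nx * (ny + e - 2)"
  shows "\<not> y_degree_fall ny m B d"
proof (cases "2 \<le> d")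
  case True
  have "rank_rows (M_y_rows ny m (tilde B) d) = m * ((ny + d - 3) choose (d - 2))"
    using assms(2-4) True assms(5) by (rule y_semiregular_full_rank_below_threshold)
  then show ?thesis
    by (simp add: y_degree_fall_iff_rank_deficient[OF assms(1)])
qed (simp add: y_degree_fall_def)

theorem proposition4:
  fixes B :: "nat \<Rightarrow> 'a::{field,finite} mpoly"
    and nx ny m :: nat
  assumes "0 < nx" and "0 < ny" and "0 < m" and "nx + ny \<le> m"
    and "bilinear_seq nx ny m B"
    and "y_semiregular nx ny m (tilde B)"
  shows "d_y_ff ny m B =
    enat (LEAST d::nat. 0 < d \<and> real d > real (nx * (ny - 1)) / real (m - nx) + 1)"
proof -
  let ?P = "\<lambda>d::nat. 0 < d \<and> real d > real (nx * (ny - 1)) / real (m - nx) + 1"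
  define D where "D = (LEAST d. ?P d)"
  have "nx < m"
    using assms(2,4) by linarith
  note threshold = real_threshold_iff[OF \<open>nx < m\<close> \<open>0 < ny\<close>]
  obtain n where "real (nx * (ny - 1)) / real (m - nx) + 1 < real n"
    using reals_Archimedean2 by blast
  then have "?P D"
    unfolding D_def by (intro LeastI[of ?P "Suc n"]) simp
  then have D: "2 \<le> D" "nx * (ny + D - 2) < m * (D - 1)"
    using threshold by blast+
  have below: "m * (e - 1) \<le> nx * (ny + e - 2)" if "2 \<le> e" "e < D" for e
    using not_less_Least[OF \<open>e < D\<close>[unfolded D_def]] threshold[of e] that by auto
  show ?thesis
    unfolding D_def[symmetric]
  proof (rule d_y_ff_eqI)
    show "y_degree_fall ny m B D"
      using assms(5) \<open>0 < ny\<close> D by (rule y_degree_fall_above_threshold)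
    show "\<not> y_degree_fall ny m B d" if "d < D" for d
      using assms(5,6) \<open>nx < m\<close> \<open>0 < ny\<close>
      by (rule no_y_degree_fall_below_threshold) (use below that in auto)
  qed
qed

end
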